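(* Let $k\in\mathbb{N}$ and let $G$ be a graph on $n$ vertices with minimum degree $\delta(G)\geq\delta\geq\frac{(k-1)n}{k}$. Suppose that $G$ has a $K_{k+1}$-component $C$ which does not contain a copy of $K_{k+2}$. Then there is a set of $k\delta-(k-1)n$ vertex-disjoint copies of $K_{k+1}$ in $G$ which all belong to $C$.
   Context: A $K_{k+1}$-walk in $G$ is a sequence $t_1,\dots,t_p$ of copies of $K_k$ such that for each $i\in[p-1]$ some copy of $K_{k+1}$ contains $t_i$ and $t_{i+1}$; $t_1,t_p$ are then $K_{k+1}$-connected; the equivalence classes of copies of $K_k$ are the $K_{k+1}$-components. For $\ell>k$, a copy of $K_\ell$ belongs to (is in) a component $C$ if it contains a copy of $K_k$ lying in $C$ (equivalently, all its copies of $K_k$ lie in $C$). $C$ contains a copy of $K_{k+2}$ if some copy of $K_{k+2}$ belongs to $C$. *)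

theory Defs
  imports Complex_Main
begin

definition simple_graph :: "'a set \<Rightarrow> ('a \<Rightarrow> 'a \<Rightarrow> bool) \<Rightarrow> bool" where
  "simple_graph V E \<longleftrightarrow> finite V \<and> (\<forall>x y. E x y \<longrightarrow> E y x) \<and> (\<forall>x. \<not> E x x)
     \<and> (\<forall>x y. E x y \<longrightarrow> x \<in> V \<and> y \<in> V)"

definition degree :: "'a set \<Rightarrow> ('a \<Rightarrow> 'a \<Rightarrow> bool) \<Rightarrow> 'a \<Rightarrow> nat" where
  "degree V E v = card {u \<in> V. E v u}"

definition copies :: "'a set \<Rightarrow> ('a \<Rightarrow> 'a \<Rightarrow> bool) \<Rightarrow> nat \<Rightarrow> 'a set set" where
  "copies V E l = {A. A \<subseteq> V \<and> card A = l \<and> (\<forall>x\<in>A. \<forall>y\<in>A. x \<noteq> y \<longrightarrow> E x y)}"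

definition clique_walk :: "'a set \<Rightarrow> ('a \<Rightarrow> 'a \<Rightarrow> bool) \<Rightarrow> nat \<Rightarrow> 'a set list \<Rightarrow> bool" where
  "clique_walk V E k ts \<longleftrightarrow> ts \<noteq> [] \<and> set ts \<subseteq> copies V E k \<and>
     (\<forall>i. Suc i < length ts \<longrightarrow>
        (\<exists>s\<in>copies V E (Suc k). ts ! i \<subseteq> s \<and> ts ! Suc i \<subseteq> s))"

definition clique_connected :: "'a set \<Rightarrow> ('a \<Rightarrow> 'a \<Rightarrow> bool) \<Rightarrow> nat \<Rightarrow> 'a set \<Rightarrow> 'a set \<Rightarrow> bool" where
  "clique_connected V E k t t' \<longleftrightarrow>
     (\<exists>ts. clique_walk V E k ts \<and> hd ts = t \<and> last ts = t')"

text \<open>K_{k+1}-components: equivalence classes of copies of K_k.\<close>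
definition clique_component :: "'a set \<Rightarrow> ('a \<Rightarrow> 'a \<Rightarrow> bool) \<Rightarrow> nat \<Rightarrow> 'a set set \<Rightarrow> bool" where
  "clique_component V E k C \<longleftrightarrow>
     (\<exists>t\<in>copies V E k. C = {t'. clique_connected V E k t t'})"

definition belongs_to :: "'a set \<Rightarrow> 'a set set \<Rightarrow> bool" where
  "belongs_to s C \<longleftrightarrow> (\<exists>t\<in>C. t \<subseteq> s)"

end

theory Submission
  imports Defs
begin

(* Write N(u) for the common neighbourhood of a copy u of K_k. Since C contains no K_{k+2},
   N(u) is independent for every u in C, so any clique meets it in at most one vertex.
   Counting non-neighbours gives |N(u)| >= n - k(n - delta) >= k delta - (k-1) n.
   Take a copy s = u + x of K_{k+1} in C and delete its vertices. Swapping a vertex of a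
   member of C for one of its common neighbours stays in C, so some member of C avoids s;
   its component in G - s lies inside C, still has no K_{k+2}, and every |N(u)| drops by
   at most one. Induction on the lower bound for |N(u)| yields the disjoint copies. *)

definition share_clique :: "'a set \<Rightarrow> ('a \<Rightarrow> 'a \<Rightarrow> bool) \<Rightarrow> nat \<Rightarrow> 'a set \<Rightarrow> 'a set \<Rightarrow> bool" where
  "share_clique V E k a b \<longleftrightarrow> (\<exists>s\<in>copies V E (Suc k). a \<subseteq> s \<and> b \<subseteq> s)"

lemma clique_walk_iff_successively:
  "clique_walk V E k ts \<longleftrightarrow>
     ts \<noteq> [] \<and> set ts \<subseteq> copies V E k \<and> successively (share_clique V E k) ts"
  unfolding clique_walk_def share_clique_def successively_conv_nth ..

lemma clique_connected_refl:
  "t \<in> copies V E k \<Longrightarrow> clique_connected V E k t t"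
  unfolding clique_connected_def clique_walk_iff_successively
  by (intro exI[of _ "[t]"]) simp

lemma clique_connected_step:
  "a \<in> copies V E k \<Longrightarrow> b \<in> copies V E k \<Longrightarrow> share_clique V E k a b \<Longrightarrow>
     clique_connected V E k a b"
  unfolding clique_connected_def clique_walk_iff_successively
  by (intro exI[of _ "[a, b]"]) simp

lemma clique_connected_trans:
  assumes "clique_connected V E k t u" and "clique_connected V E k u w"
  shows "clique_connected V E k t w"
proof -
  obtain xs where xs: "clique_walk V E k xs" "hd xs = t" "last xs = u"
    using assms(1) unfolding clique_connected_def by blast
  obtain ys where ys: "clique_walk V E k ys" "hd ys = u" "last ys = w"
    using assms(2) unfolding clique_connected_def by blast
  then obtain ys' where ys': "ys = u # ys'"
    by (cases ys) (auto simp: clique_walk_def)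
  have "clique_walk V E k (xs @ ys')"
    using xs ys ys' by (auto simp: clique_walk_iff_successively successively_append_iff successively_Cons)
  moreover have "hd (xs @ ys') = t" "last (xs @ ys') = w"
    using xs ys ys' by (auto simp: clique_walk_def last_append)
  ultimately show ?thesis
    unfolding clique_connected_def by blast
qed

lemma copies_mono:
  "V' \<subseteq> V \<Longrightarrow> (\<And>x y. E' x y \<Longrightarrow> E x y) \<Longrightarrow> copies V' E' l \<subseteq> copies V E l"
  unfolding copies_def by blast

lemma clique_connected_mono:
  assumes "V' \<subseteq> V" and "\<And>x y. E' x y \<Longrightarrow> E x y" and "clique_connected V' E' k t u"
  shows "clique_connected V E k t u"
proof -
  have mono: "copies V' E' l \<subseteq> copies V E l" for l
    using assms(1,2) by (rule copies_mono)
  obtain ts where ts: "clique_walk V' E' k ts" "hd ts = t" "last ts = u"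
    using assms(3) unfolding clique_connected_def by blast
  have "share_clique V E k a b" if "share_clique V' E' k a b" for a b
    using that mono unfolding share_clique_def by blast
  then have "clique_walk V E k ts"
    using ts(1) mono unfolding clique_walk_iff_successively
    by (blast intro: successively_mono)
  then show ?thesis
    using ts(2,3) unfolding clique_connected_def by blast
qed

lemma clique_component_subset_copies:
  "clique_component V E k C \<Longrightarrow> C \<subseteq> copies V E k"
  unfolding clique_component_def clique_connected_def clique_walk_def
  by (auto intro: last_in_set)

lemma clique_component_closed:
  assumes "clique_component V E k C" and "u \<in> C" and "clique_connected V E k u w"
  shows "w \<in> C"
  using assms clique_connected_trans unfolding clique_component_def by blast

lemma clique_component_nonempty:
  "clique_component V E k C \<Longrightarrow> C \<noteq> {}"
  unfolding clique_component_def using clique_connected_refl by blast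

lemma clique_component_closed_share:
  assumes "clique_component V E k C" and "u \<in> C" and "w \<in> copies V E k"
    and "share_clique V E k u w"
  shows "w \<in> C"
  using assms clique_component_closed clique_component_subset_copies clique_connected_step
  by blast

definition induced_edges :: "('a \<Rightarrow> 'a \<Rightarrow> bool) \<Rightarrow> 'a set \<Rightarrow> 'a \<Rightarrow> 'a \<Rightarrow> bool" where
  "induced_edges E W x y \<longleftrightarrow> E x y \<and> x \<in> W \<and> y \<in> W"

lemma simple_graph_induced:
  "simple_graph V E \<Longrightarrow> W \<subseteq> V \<Longrightarrow> simple_graph W (induced_edges E W)"
  unfolding simple_graph_def induced_edges_def by (auto intro: finite_subset)

lemma copies_induced:
  "W \<subseteq> V \<Longrightarrow> copies W (induced_edges E W) l = {A \<in> copies V E l. A \<subseteq> W}"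
  unfolding copies_def induced_edges_def by blast

lemma clique_component_induced:
  assumes "clique_component V E k C" and "t \<in> C" and "t \<subseteq> W" and "W \<subseteq> V"
  obtains C' where "clique_component W (induced_edges E W) k C'" and "C' \<subseteq> C"
proof
  let ?C' = "{t'. clique_connected W (induced_edges E W) k t t'}"
  have "t \<in> copies W (induced_edges E W) k"
    using assms clique_component_subset_copies copies_induced by blast
  then show "clique_component W (induced_edges E W) k ?C'"
    unfolding clique_component_def by blast
  have "clique_connected V E k t t'" if "clique_connected W (induced_edges E W) k t t'" for t'
    by (rule clique_connected_mono[OF assms(4) _ that]) (simp add: induced_edges_def)
  then show "?C' \<subseteq> C"
    using assms(1,2) clique_component_closed by blast
qed

definition common_nbhd :: "'a set \<Rightarrow> ('a \<Rightarrow> 'a \<Rightarrow> bool) \<Rightarrow> 'a set \<Rightarrow> 'a set" where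
  "common_nbhd V E u = {x \<in> V. \<forall>y\<in>u. E x y}"

lemma common_nbhd_induced:
  "u \<subseteq> W \<Longrightarrow> W \<subseteq> V \<Longrightarrow> common_nbhd W (induced_edges E W) u = common_nbhd V E u \<inter> W"
  unfolding common_nbhd_def induced_edges_def by blast

lemma card_common_nbhd_ge:
  assumes "simple_graph V E" and "u \<subseteq> V" and "\<forall>v\<in>V. degree V E v \<ge> \<delta>"
  shows "card V - card u * (card V - \<delta>) \<le> card (common_nbhd V E u)"
proof -
  have fin: "finite V" "finite u"
    using assms(1,2) unfolding simple_graph_def by (auto intro: finite_subset)
  define N where "N v = {x \<in> V. \<not> E v x}" for v
  have nbhd_eq: "common_nbhd V E u = V - (\<Union>v\<in>u. N v)"
    using assms(1) unfolding simple_graph_def common_nbhd_def N_def by blast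
  have N_bound: "card (N v) \<le> card V - \<delta>" if "v \<in> u" for v
  proof -
    have "N v = V - {x \<in> V. E v x}"
      unfolding N_def by blast
    then have "card (N v) = card V - degree V E v"
      using fin unfolding degree_def by (simp add: card_Diff_subset)
    then show ?thesis
      using assms(2,3) that by fastforce
  qed
  have "card (\<Union>v\<in>u. N v) \<le> (\<Sum>v\<in>u. card (N v))"
    using fin(2) by (rule card_UN_le)
  also have "\<dots> \<le> card u * (card V - \<delta>)"
    using sum_bounded_above[of u "\<lambda>v. card (N v)", OF N_bound] by simp
  finally have "card (\<Union>v\<in>u. N v) \<le> card u * (card V - \<delta>)" .
  moreover have "card V - card (\<Union>v\<in>u. N v) \<le> card (V - (\<Union>v\<in>u. N v))"
    using fin by (simp add: diff_card_le_card_Diff N_def)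
  ultimately show ?thesis
    unfolding nbhd_eq by linarith
qed

lemma insert_common_nbhd_copies:
  assumes "simple_graph V E" and "u \<in> copies V E k" and "x \<in> common_nbhd V E u"
  shows "insert x u \<in> copies V E (Suc k)"
proof -
  have "finite u" "x \<notin> u"
    using assms finite_subset unfolding simple_graph_def copies_def common_nbhd_def by blast+
  then show ?thesis
    using assms unfolding simple_graph_def copies_def common_nbhd_def by auto
qed

lemma common_nbhd_independent:
  assumes "simple_graph V E" and "clique_component V E k C"
    and "\<not> (\<exists>s\<in>copies V E (k + 2). belongs_to s C)"
    and "u \<in> C" and "x \<in> common_nbhd V E u" and "y \<in> common_nbhd V E u"
  shows "\<not> E x y"
proof
  assume "E x y"
  have "u \<in> copies V E k"
    using assms(2,4) clique_component_subset_copies by blast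
  then have "insert y u \<in> copies V E (Suc k)"
    by (rule insert_common_nbhd_copies[OF assms(1) _ assms(6)])
  moreover have "x \<in> common_nbhd V E (insert y u)"
    using assms(5) \<open>E x y\<close> unfolding common_nbhd_def by blast
  ultimately have "insert x (insert y u) \<in> copies V E (k + 2)"
    using assms(1) insert_common_nbhd_copies by fastforce
  moreover have "belongs_to (insert x (insert y u)) C"
    using assms(4) unfolding belongs_to_def by blast
  ultimately show False
    using assms(3) by blast
qed

lemma card_common_nbhd_Diff_clique:
  assumes "simple_graph V E" and "clique_component V E k C"
    and "\<not> (\<exists>s\<in>copies V E (k + 2). belongs_to s C)"
    and "u \<in> C" and "\<forall>a\<in>s. \<forall>b\<in>s. a \<noteq> b \<longrightarrow> E a b"
  shows "card (common_nbhd V E u) - 1 \<le> card (common_nbhd V E u - s)"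
proof -
  have "finite (common_nbhd V E u)"
    using assms(1) unfolding simple_graph_def common_nbhd_def by simp
  moreover have "card (common_nbhd V E u \<inter> s) \<le> Suc 0"
    using calculation common_nbhd_independent[OF assms(1-4)] assms(5)
    by (auto simp: card_le_Suc0_iff_eq)
  ultimately show ?thesis
    by (simp add: card_Diff_subset_Int)
qed

lemma clique_component_exchange:
  assumes "simple_graph V E" and "clique_component V E k C"
    and "u \<in> C" and "w \<in> u" and "y \<in> common_nbhd V E u"
  shows "insert y (u - {w}) \<in> C"
proof (rule clique_component_closed_share[OF assms(2,3)])
  have u: "u \<in> copies V E k"
    using assms(2,3) clique_component_subset_copies by blast
  have s: "insert y u \<in> copies V E (Suc k)"
    using assms(1) u assms(5) by (rule insert_common_nbhd_copies)
  have "y \<notin> u" "finite u"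
    using assms(1,5) u finite_subset unfolding simple_graph_def common_nbhd_def copies_def by blast+
  moreover have "card (insert y (u - {w})) = card u"
    using calculation assms(4) by (metis Diff_iff card_Suc_Diff1 card_insert_disjoint finite_Diff)
  ultimately show "insert y (u - {w}) \<in> copies V E k"
    using s u unfolding copies_def by auto
  show "share_clique V E k u (insert y (u - {w}))"
    unfolding share_clique_def using s by blast
qed

lemma clique_component_avoids_clique:
  assumes "simple_graph V E" and "clique_component V E k C"
    and "\<not> (\<exists>s\<in>copies V E (k + 2). belongs_to s C)"
    and "\<forall>u\<in>C. 2 \<le> card (common_nbhd V E u)"
    and "\<forall>a\<in>s. \<forall>b\<in>s. a \<noteq> b \<longrightarrow> E a b"
    and "u \<in> C"
  shows "\<exists>u'\<in>C. u' \<inter> s = {}"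
  using assms(6)
proof (induction "card (u \<inter> s)" arbitrary: u rule: less_induct)
  case less
  show ?case
  proof (cases "u \<inter> s = {}")
    case True
    with less.prems show ?thesis by blast
  next
    case False
    then obtain w where w: "w \<in> u" "w \<in> s" by blast
    have "1 \<le> card (common_nbhd V E u - s)"
      using card_common_nbhd_Diff_clique[OF assms(1-3) less.prems assms(5)] assms(4) less.prems
      by fastforce
    then obtain y where y: "y \<in> common_nbhd V E u" "y \<notin> s"
      by (metis Diff_iff all_not_in_conv card.empty not_one_le_zero)
    let ?u' = "insert y (u - {w})"
    have "?u' \<in> C"
      using assms(1,2) less.prems w(1) y(1) by (rule clique_component_exchange)
    moreover have "u \<subseteq> V"
      using clique_component_subset_copies[OF assms(2)] less.prems unfolding copies_def by blast
    then have "finite u"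
      using assms(1) finite_subset unfolding simple_graph_def by blast
    then have "card (?u' \<inter> s) < card (u \<inter> s)"
      using w y(2) by (intro psubset_card_mono) auto
    ultimately show ?thesis
      using less.hyps by blast
  qed
qed

lemma clique_component_remove_clique:
  assumes "simple_graph V E" and "clique_component V E k C"
    and "\<not> (\<exists>s\<in>copies V E (k + 2). belongs_to s C)"
    and "\<forall>u\<in>C. Suc m \<le> card (common_nbhd V E u)"
    and "\<forall>a\<in>s. \<forall>b\<in>s. a \<noteq> b \<longrightarrow> E a b"
    and "t \<in> C" and "t \<inter> s = {}"
  obtains C' where "clique_component (V - s) (induced_edges E (V - s)) k C'" and "C' \<subseteq> C"
    and "\<not> (\<exists>s'\<in>copies (V - s) (induced_edges E (V - s)) (k + 2). belongs_to s' C')"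
    and "\<forall>u\<in>C'. m \<le> card (common_nbhd (V - s) (induced_edges E (V - s)) u)"
proof -
  let ?W = "V - s"
  have "t \<subseteq> ?W"
    using assms(2,6,7) clique_component_subset_copies unfolding copies_def by blast
  then obtain C' where cc': "clique_component ?W (induced_edges E ?W) k C'" and "C' \<subseteq> C"
    using clique_component_induced[OF assms(2,6)] by blast
  moreover have "\<not> (\<exists>s'\<in>copies ?W (induced_edges E ?W) (k + 2). belongs_to s' C')"
    using assms(3) \<open>C' \<subseteq> C\<close> copies_induced[of ?W V] unfolding belongs_to_def by blast
  moreover have "m \<le> card (common_nbhd ?W (induced_edges E ?W) u)" if "u \<in> C'" for u
  proof -
    have "u \<in> copies ?W (induced_edges E ?W) k" "u \<in> C"
      using that clique_component_subset_copies[OF cc'] \<open>C' \<subseteq> C\<close> by blast+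
    then have "common_nbhd ?W (induced_edges E ?W) u = common_nbhd V E u - s"
      using common_nbhd_induced[of u ?W V E] unfolding copies_def common_nbhd_def by blast
    then show ?thesis
      using card_common_nbhd_Diff_clique[OF assms(1-3) \<open>u \<in> C\<close> assms(5)] assms(4) \<open>u \<in> C\<close>
      by fastforce
  qed
  ultimately show ?thesis
    using that by blast
qed

lemma disjoint_cliques_in_component:
  assumes "simple_graph V E" and "clique_component V E k C"
    and "\<not> (\<exists>s\<in>copies V E (k + 2). belongs_to s C)"
    and "\<forall>u\<in>C. m \<le> card (common_nbhd V E u)"
  shows "\<exists>S. S \<subseteq> copies V E (k + 1) \<and> pairwise disjnt S \<and> card S = m \<and>
             (\<forall>s\<in>S. belongs_to s C)"
  using assms
proof (induction m arbitrary: V E C)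
  case 0
  show ?case by (intro exI[of _ "{}"]) simp
next
  case (Suc m)
  note sg = Suc.prems(1) and cc = Suc.prems(2) and no = Suc.prems(3) and nbhd = Suc.prems(4)
  obtain t where t: "t \<in> C"
    using clique_component_nonempty[OF cc] by blast
  then obtain x where x: "x \<in> common_nbhd V E t"
    using nbhd by (metis card.empty ex_in_conv not_less_eq_eq zero_le)
  define s where "s = insert x t"
  have s: "s \<in> copies V E (k + 1)"
    unfolding s_def using sg cc t x clique_component_subset_copies insert_common_nbhd_copies
    by fastforce
  have s_C: "belongs_to s C"
    unfolding belongs_to_def s_def using t by blast
  have s_clique: "\<forall>a\<in>s. \<forall>b\<in>s. a \<noteq> b \<longrightarrow> E a b"
    using s unfolding copies_def by blast
  show ?case
  proof (cases "m = 0")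
    case True
    then show ?thesis
      using s s_C by (intro exI[of _ "{s}"]) auto
  next
    case False
    obtain t0 where "t0 \<in> C" "t0 \<inter> s = {}"
      using clique_component_avoids_clique[OF sg cc no _ s_clique t] nbhd False by fastforce
    then obtain C' where cc': "clique_component (V - s) (induced_edges E (V - s)) k C'"
      and "C' \<subseteq> C"
      and no': "\<not> (\<exists>s'\<in>copies (V - s) (induced_edges E (V - s)) (k + 2). belongs_to s' C')"
      and nbhd': "\<forall>u\<in>C'. m \<le> card (common_nbhd (V - s) (induced_edges E (V - s)) u)"
      using clique_component_remove_clique[OF sg cc no nbhd s_clique] by blast
    obtain S where S: "S \<subseteq> copies (V - s) (induced_edges E (V - s)) (k + 1)"
      "pairwise disjnt S" "card S = m" "\<forall>s'\<in>S. belongs_to s' C'"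
      using Suc.IH[OF simple_graph_induced[OF sg Diff_subset] cc' no' nbhd'] by blast
    have "S \<subseteq> copies V E (k + 1)" "\<forall>s'\<in>S. disjnt s s'"
      using S(1) copies_induced[of "V - s" V] unfolding disjnt_def by auto
    moreover have "\<forall>s'\<in>S. belongs_to s' C"
      using S(4) \<open>C' \<subseteq> C\<close> unfolding belongs_to_def by blast
    moreover have "s \<notin> S"
      using \<open>\<forall>s'\<in>S. disjnt s s'\<close> s unfolding copies_def disjnt_def by fastforce
    moreover have "finite S"
      using S(3) False card.infinite by fastforce
    ultimately show ?thesis
      using S(2,3) s s_C by (intro exI[of _ "insert s S"]) (auto simp: pairwise_insert disjnt_sym)
  qed
qed

theorem lemma4p2:
  fixes V :: "'a set" and E :: "'a \<Rightarrow> 'a \<Rightarrow> bool" and k n \<delta> :: nat and C :: "'a set set"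
  assumes "simple_graph V E"
    and "card V = n"
    and "k \<ge> 1"
    and "\<forall>v\<in>V. degree V E v \<ge> \<delta>"
    and "real \<delta> \<ge> real ((k - 1) * n) / real k"
    and "clique_component V E k C"
    and "\<not> (\<exists>s\<in>copies V E (k + 2). belongs_to s C)"
  shows "\<exists>S. S \<subseteq> copies V E (k + 1) \<and> pairwise disjnt S \<and>
             card S = k * \<delta> - (k - 1) * n \<and> (\<forall>s\<in>S. belongs_to s C)"
proof (rule disjoint_cliques_in_component[OF assms(1,6,7)], intro ballI)
  (* The hypothesis on delta only ensures k delta - (k-1) n >= 0. *)
  fix u assume "u \<in> C"
  then have "u \<in> copies V E k"
    using assms(6) clique_component_subset_copies by blast
  then have "card u = k" "u \<subseteq> V" "u \<noteq> {}"
    using assms(3) unfolding copies_def by auto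
  then obtain v where "v \<in> V" by blast
  then have "\<delta> \<le> n"
    using assms(1,2,4) card_mono[of V "{x \<in> V. E v x}"]
    unfolding simple_graph_def degree_def by fastforce
  then have "k * \<delta> - (k - 1) * n \<le> n - k * (n - \<delta>)"
    by (simp add: diff_mult_distrib diff_mult_distrib2)
  also have "\<dots> \<le> card (common_nbhd V E u)"
    using card_common_nbhd_ge[OF assms(1) \<open>u \<subseteq> V\<close> assms(4)] \<open>card u = k\<close> assms(2) by simp
  finally show "k * \<delta> - (k - 1) * n \<le> card (common_nbhd V E u)" .
qed

end
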